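(* Let $(x_n)_{n \geq 1}$ be a sequence of vectors with $x_n$ on the complex unit sphere of $\mathbb{C}^n$ for all $n$. Then there exists a unique virtual isometry $(u_n)_{n \geq 1}$ such that $u_n(e_n) = x_n$ for all $n \geq 1$, and it is given by $u_n = r_n r_{n-1}\cdots r_1$, where for $j \in \{1,\dots,n\}$, $r_j = \mathrm{Id}$ if $x_j = e_j$, and otherwise $r_j$ is the unique reflection (unitary operator $r$ with $r-\mathrm{Id}$ of rank one, acting on $\mathbb{C}^j$ and fixing $e_k$ for $k>j$) such that $r_j(e_j) = x_j$. Moreover, if $x_n = e_{i_n}$ with $i_n \in \{1,\dots,n\}$ for all $n$, then $(u_n)_{n\ge1}$ is the sequence of permutation matrices (with $u_n e_j = e_{\sigma_n(j)}$) of the virtual permutation $(\sigma_n)_{n\ge1}$ given by $\sigma_n = \tau_{n,i_n}\tau_{n-1,i_{n-1}}\cdots\tau_{1,i_1}$, where $\tau_{j,k} = \mathrm{Id}$ if $j = k$ and $\tau_{j,k}$ is the transposition $(j,k)$ if $j \neq k$.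
   Context: Let $(e_k)$ be the canonical basis of $\ell^2$; identify $\mathbb{C}^n$ with the span of $e_1,\dots,e_n$ and $U(n)$ with the unitary operators fixing every $e_k$, $k>n$. For $n\ge m\ge1$ and $u\in U(n)$, $\pi_{n,m}(u)$ is the unique $v\in U(m)$ such that the range of $u-v$ is contained in $(u-\mathrm{Id})(\mathrm{span}\{e_k:k>m\})$ (existence and uniqueness are known). A virtual isometry is a sequence $(u_n)_{n\ge1}$ with $u_n\in U(n)$ and $\pi_{n+1,n}(u_{n+1})=u_n$ for all $n\ge1$. A virtual permutation is a sequence $(\sigma_n)$, $\sigma_n\in\mathcal{S}_n$, such that for $n\ge m$, $\sigma_m$ is obtained from $\sigma_n$ by deleting $m+1,\dots,n$ from its cycle structure. *)

theory Defs
  imports "HOL-Analysis.Analysis" "HOL-Combinatorics.Permutations"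
begin

(* Operators on l^2 that fix all but finitely many basis vectors are represented by
   their (infinite) matrices  u :: nat => nat => complex,  u i j = <e_i, u e_j>.
   Basis vectors are e_1, e_2, ...; index 0 is a dummy coordinate, always fixed. *)

type_synonym cmat = "nat \<Rightarrow> nat \<Rightarrow> complex"
type_synonym cvec = "nat \<Rightarrow> complex"

definition kd :: "nat \<Rightarrow> nat \<Rightarrow> complex" where
  "kd i j = (if i = j then 1 else 0)"

definition evec :: "nat \<Rightarrow> cvec" where
  "evec k = (\<lambda>i. if i = k then 1 else 0)"

definition Idm :: cmat where
  "Idm = (\<lambda>i j. kd i j)"

(* product of two such matrices (row sums are finite for the matrices considered) *)
definition mmul :: "cmat \<Rightarrow> cmat \<Rightarrow> cmat" where
  "mmul A B = (\<lambda>i j. \<Sum>k\<in>{k. A i k \<noteq> 0}. A i k * B k j)"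

definition U_grp :: "nat \<Rightarrow> cmat set" where
  "U_grp n = {u. (\<forall>i j. (i \<notin> {1..n} \<or> j \<notin> {1..n}) \<longrightarrow> u i j = kd i j)
             \<and> (\<forall>i\<in>{1..n}. \<forall>j\<in>{1..n}. (\<Sum>k=1..n. cnj (u k i) * u k j) = kd i j)
             \<and> (\<forall>i\<in>{1..n}. \<forall>j\<in>{1..n}. (\<Sum>k=1..n. u i k * cnj (u j k)) = kd i j)}"

(* range of (u - v) contained in (u - Id)(span{e_k : k > m}), for u, v acting on C^n *)
definition range_cond :: "nat \<Rightarrow> nat \<Rightarrow> cmat \<Rightarrow> cmat \<Rightarrow> bool" where
  "range_cond n m u v = (\<forall>j. \<exists>c :: nat \<Rightarrow> complex. \<forall>i.
      u i j - v i j = (\<Sum>k\<in>{m<..n}. c k * (u i k - kd i k)))"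

definition pi_proj :: "nat \<Rightarrow> nat \<Rightarrow> cmat \<Rightarrow> cmat" where
  "pi_proj n m u = (THE v. v \<in> U_grp m \<and> range_cond n m u v)"

definition virtual_isometry :: "(nat \<Rightarrow> cmat) \<Rightarrow> bool" where
  "virtual_isometry u = (\<forall>n\<ge>1. u n \<in> U_grp n \<and> pi_proj (Suc n) n (u (Suc n)) = u n)"

definition sphere_n :: "nat \<Rightarrow> cvec set" where
  "sphere_n n = {x. (\<forall>i. i \<notin> {1..n} \<longrightarrow> x i = 0) \<and> (\<Sum>i=1..n. (cmod (x i))\<^sup>2) = 1}"

definition rank_one_pert :: "cmat \<Rightarrow> bool" where
  "rank_one_pert r = (\<exists>a b :: cvec. a \<noteq> (\<lambda>_. 0) \<and> b \<noteq> (\<lambda>_. 0) \<and>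
      (\<forall>i j. r i j - kd i j = a i * b j))"

definition refl_to :: "nat \<Rightarrow> cvec \<Rightarrow> cmat" where
  "refl_to j x = (THE r. r \<in> U_grp j \<and> rank_one_pert r \<and> (\<forall>i. r i j = x i))"

definition r_op :: "nat \<Rightarrow> cvec \<Rightarrow> cmat" where
  "r_op j x = (if x = evec j then Idm else refl_to j x)"

fun rprod :: "(nat \<Rightarrow> cmat) \<Rightarrow> nat \<Rightarrow> cmat" where
  "rprod r 0 = Idm"
| "rprod r (Suc n) = mmul (r (Suc n)) (rprod r n)"

(* deleting m+1, ..., n from the cycle structure of sigma *)
definition perm_restrict :: "nat \<Rightarrow> (nat \<Rightarrow> nat) \<Rightarrow> nat \<Rightarrow> nat" where
  "perm_restrict m \<sigma> i = (if i \<in> {1..m}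
      then (\<sigma> ^^ (LEAST k. k > 0 \<and> (\<sigma> ^^ k) i \<in> {1..m})) i else i)"

definition virtual_perm :: "(nat \<Rightarrow> nat \<Rightarrow> nat) \<Rightarrow> bool" where
  "virtual_perm \<sigma> = ((\<forall>n\<ge>1. \<sigma> n permutes {1..n}) \<and>
      (\<forall>m n. 1 \<le> m \<and> m \<le> n \<longrightarrow> \<sigma> m = perm_restrict m (\<sigma> n)))"

definition tau :: "nat \<Rightarrow> nat \<Rightarrow> nat \<Rightarrow> nat" where
  "tau j k = (if j = k then id else Transposition.transpose j k)"

fun sigma_prod :: "(nat \<Rightarrow> nat) \<Rightarrow> nat \<Rightarrow> nat \<Rightarrow> nat" where
  "sigma_prod ii 0 = id"
| "sigma_prod ii (Suc n) = tau (Suc n) (ii (Suc n)) \<circ> sigma_prod ii n"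

definition perm_mat :: "(nat \<Rightarrow> nat) \<Rightarrow> cmat" where
  "perm_mat \<sigma> = (\<lambda>i j. if i = \<sigma> j then 1 else 0)"

end

theory Submission
  imports Defs
begin

text \<open>
  A unitary \<open>u \<in> U(n+1)\<close> with \<open>u e\<^sub>n\<^sub>+\<^sub>1 = x\<close> factors as \<open>u = r\<^sub>x w\<close> with \<open>w = r\<^sub>x\<^sup>* u \<in> U(n)\<close>,
  where \<open>r\<^sub>x = Id + \<beta> y y\<^sup>*\<close>, \<open>y = x - e\<^sub>n\<^sub>+\<^sub>1\<close>, is the reflection sending \<open>e\<^sub>n\<^sub>+\<^sub>1\<close> to \<open>x\<close>.
  Since \<open>r\<^sub>x w - w = \<beta> y (y\<^sup>* w)\<close> has its range in the line through \<open>y = u e\<^sub>n\<^sub>+\<^sub>1 - e\<^sub>n\<^sub>+\<^sub>1\<close>,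
  the projection \<open>\<pi>\<^sub>n\<^sub>+\<^sub>1\<^sub>,\<^sub>n\<close> maps \<open>r\<^sub>x w\<close> to \<open>w\<close>. So a virtual isometry with prescribed
  columns \<open>u\<^sub>n e\<^sub>n = x\<^sub>n\<close> must satisfy \<open>u\<^sub>n\<^sub>+\<^sub>1 = r\<^sub>n\<^sub>+\<^sub>1 u\<^sub>n\<close>, and these products do form one.
  For \<open>x\<^sub>n = e\<^sub>i\<close> the reflection is the permutation matrix of the transposition \<open>(n i)\<close>, and
  composing \<open>\<sigma>\<^sub>n\<close> with \<open>\<tau>\<^sub>n\<^sub>+\<^sub>1\<^sub>,\<^sub>i\<close> inserts \<open>n+1\<close> into the cycle of \<open>\<sigma>\<^sub>n\<close> just before \<open>i\<close>,
  which deleting \<open>n+1\<close> undoes.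
\<close>

lemma kd_simps [simp]: "kd i i = 1" "i \<noteq> j \<Longrightarrow> kd i j = 0"
  by (auto simp: kd_def)

lemma kd_commute: "kd i j = kd j i"
  by (auto simp: kd_def)

lemma cnj_kd [simp]: "cnj (kd i j) = kd i j"
  by (auto simp: kd_def)

lemma sum_mult_kd: "p \<in> S \<Longrightarrow> finite S \<Longrightarrow> (\<Sum>q\<in>S. f q * kd p q) = f p"
  by (simp add: kd_def if_distrib[of "\<lambda>c. _ * c"] cong: if_cong)

lemma sum_kd_mult: "p \<in> S \<Longrightarrow> finite S \<Longrightarrow> (\<Sum>q\<in>S. kd q p * f q) = f p"
  using sum_mult_kd[of p S f] by (simp add: kd_commute mult.commute)

lemma sum_kd_plus_mult_kd_plus:
  assumes "finite S" "i \<in> S" "l \<in> S"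
  shows "(\<Sum>k\<in>S. (kd k i + p k) * (kd k l + q k)) = kd i l + q i + p l + (\<Sum>k\<in>S. p k * q k)"
proof -
  have "(\<Sum>k\<in>S. (kd k i + p k) * (kd k l + q k)) =
     (\<Sum>k\<in>S. kd k i * kd k l) + (\<Sum>k\<in>S. kd k i * q k) + (\<Sum>k\<in>S. p k * kd l k) + (\<Sum>k\<in>S. p k * q k)"
    by (simp add: algebra_simps sum.distrib kd_commute)
  then show ?thesis
    using sum_kd_mult[OF assms(2,1), of "\<lambda>k. kd k l"] sum_kd_mult[OF assms(2,1), of q]
      sum_mult_kd[OF assms(3,1), of p]
    by simp
qed

lemma sum_cnj_mult_self_eq_0D:
  assumes "finite S" "(\<Sum>k\<in>S. cnj (f k) * f k) = 0" "k \<in> S"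
  shows "f k = 0"
proof -
  have "(\<Sum>k\<in>S. cnj (f k) * f k) = complex_of_real (\<Sum>k\<in>S. (cmod (f k))\<^sup>2)"
    by (simp add: complex_norm_square[symmetric] mult.commute del: of_real_power)
  then have "(\<Sum>k\<in>S. (cmod (f k))\<^sup>2) = 0"
    using assms(2) by (metis of_real_eq_0_iff)
  then show ?thesis
    using assms(1,3) sum_nonneg_eq_0_iff[of S "\<lambda>k. (cmod (f k))\<^sup>2"] by simp
qed

subsection \<open>Finitely supported unitary matrices\<close>

lemma mmul_eq_sum:
  assumes "finite S" "\<And>k. k \<notin> S \<Longrightarrow> A i k = 0"
  shows "mmul A B i j = (\<Sum>k\<in>S. A i k * B k j)"
  unfolding mmul_def using assms by (intro sum.mono_neutral_left) auto

lemma mmul_cong_column: "(\<And>k. B k j = C k j) \<Longrightarrow> mmul A B i j = mmul A C i j"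
  by (simp add: mmul_def)

lemma U_grp_outside: "A \<in> U_grp n \<Longrightarrow> i \<notin> {1..n} \<or> j \<notin> {1..n} \<Longrightarrow> A i j = kd i j"
  by (auto simp: U_grp_def)

lemma U_grp_columns:
  "A \<in> U_grp n \<Longrightarrow> i \<in> {1..n} \<Longrightarrow> j \<in> {1..n} \<Longrightarrow> (\<Sum>k=1..n. cnj (A k i) * A k j) = kd i j"
  by (auto simp: U_grp_def)

lemma U_grp_rows:
  "A \<in> U_grp n \<Longrightarrow> i \<in> {1..n} \<Longrightarrow> j \<in> {1..n} \<Longrightarrow> (\<Sum>k=1..n. A i k * cnj (A j k)) = kd i j"
  by (auto simp: U_grp_def)

lemma mmul_U_grp_outside: "A \<in> U_grp n \<Longrightarrow> i \<notin> {1..n} \<Longrightarrow> mmul A B i j = B i j"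
  using mmul_eq_sum[of "{i}" A i B j] U_grp_outside[of A n i] by (auto simp: kd_def)

lemma mmul_U_grp_inside:
  "A \<in> U_grp n \<Longrightarrow> i \<in> {1..n} \<Longrightarrow> mmul A B i j = (\<Sum>k=1..n. A i k * B k j)"
  by (rule mmul_eq_sum) (auto dest: U_grp_outside[of A n i])

lemma U_grp_0: "U_grp 0 = {Idm}"
  by (auto simp: U_grp_def Idm_def)

lemma Idm_in_U_grp: "Idm \<in> U_grp n"
proof -
  have "(\<Sum>k=1..n. cnj (kd k i) * kd k j) = kd i j" if "i \<in> {1..n}" for i j
    using sum_kd_mult[OF that, of "\<lambda>k. kd k j"] by simp
  moreover have "(\<Sum>k=1..n. kd i k * cnj (kd j k)) = kd i j" if "j \<in> {1..n}" for i j
    using sum_kd_mult[OF that, of "\<lambda>k. kd i k"] by (simp add: kd_commute mult.commute)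
  ultimately show ?thesis
    unfolding U_grp_def Idm_def by auto
qed

lemma mmul_Idm_left [simp]: "mmul Idm B = B"
proof (intro ext)
  fix i j
  show "mmul Idm B i j = B i j"
    using mmul_eq_sum[of "{i}" Idm i B j] by (simp add: Idm_def kd_def)
qed

lemma U_grp_Suc:
  assumes "A \<in> U_grp n"
  shows "A \<in> U_grp (Suc n)"
proof -
  have last: "A (Suc n) k = kd (Suc n) k" "A k (Suc n) = kd k (Suc n)" for k
    using U_grp_outside[OF assms] by auto
  have "(\<Sum>k=1..Suc n. cnj (A k i) * A k j) = kd i j"
    if "i \<in> {1..Suc n}" "j \<in> {1..Suc n}" for i j
  proof (cases "i = Suc n \<or> j = Suc n")
    case True
    then show ?thesis using that last by (auto simp: kd_def)
  next
    case False
    then show ?thesis using that U_grp_columns[OF assms, of i j] last by (simp add: kd_def)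
  qed
  moreover have "(\<Sum>k=1..Suc n. A i k * cnj (A j k)) = kd i j"
    if "i \<in> {1..Suc n}" "j \<in> {1..Suc n}" for i j
  proof (cases "i = Suc n \<or> j = Suc n")
    case True
    then show ?thesis using that last by (auto simp: kd_def)
  next
    case False
    then show ?thesis using that U_grp_rows[OF assms, of i j] last by (simp add: kd_def)
  qed
  ultimately show ?thesis
    using U_grp_outside[OF assms] unfolding U_grp_def by auto
qed

lemma U_grp_Suc_corner_column:
  assumes u: "u \<in> U_grp (Suc m)" and corner: "u (Suc m) (Suc m) = 1"
  shows "u i (Suc m) = kd i (Suc m)"
proof -
  have "(\<Sum>k=1..Suc m. cnj (u k (Suc m)) * u k (Suc m)) = 1"
    using U_grp_columns[OF u, of "Suc m" "Suc m"] by simp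
  then have "(\<Sum>k=1..m. cnj (u k (Suc m)) * u k (Suc m)) = 0"
    using corner by simp
  then have "u i (Suc m) = 0" if "i \<in> {1..m}"
    using sum_cnj_mult_self_eq_0D[of "{1..m}" "\<lambda>k. u k (Suc m)" i] that by simp
  then show ?thesis
    using U_grp_outside[OF u, of i] corner by (cases "i \<in> {1..m}"; cases "i = Suc m") auto
qed

lemma U_grp_Suc_corner_row:
  assumes u: "u \<in> U_grp (Suc m)" and corner: "u (Suc m) (Suc m) = 1"
  shows "u (Suc m) j = kd (Suc m) j"
proof -
  have "(\<Sum>k=1..Suc m. cnj (cnj (u (Suc m) k)) * cnj (u (Suc m) k)) = 1"
    using U_grp_rows[OF u, of "Suc m" "Suc m"] by simp
  then have "(\<Sum>k=1..m. cnj (cnj (u (Suc m) k)) * cnj (u (Suc m) k)) = 0"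
    using corner by simp
  then have "u (Suc m) j = 0" if "j \<in> {1..m}"
    using sum_cnj_mult_self_eq_0D[of "{1..m}" "\<lambda>k. cnj (u (Suc m) k)" j] that by simp
  then show ?thesis
    using U_grp_outside[OF u, of "Suc m" j] corner by (cases "j \<in> {1..m}"; cases "j = Suc m") auto
qed

lemma U_grp_Suc_corner:
  assumes u: "u \<in> U_grp (Suc m)" and corner: "u (Suc m) (Suc m) = 1"
  shows "u \<in> U_grp m"
proof -
  note col = U_grp_Suc_corner_column[OF u corner] and row = U_grp_Suc_corner_row[OF u corner]
  have "u i j = kd i j" if "i \<notin> {1..m} \<or> j \<notin> {1..m}" for i j
    using that U_grp_outside[OF u, of i j] col[of i] row[of j]
    by (cases "i = Suc m"; cases "j = Suc m") auto
  moreover have "(\<Sum>k=1..m. cnj (u k i) * u k j) = kd i j"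
    if "i \<in> {1..m}" "j \<in> {1..m}" for i j
    using U_grp_columns[OF u, of i j] that row by simp
  moreover have "(\<Sum>k=1..m. u i k * cnj (u j k)) = kd i j"
    if "i \<in> {1..m}" "j \<in> {1..m}" for i j
    using U_grp_rows[OF u, of i j] that col by simp
  ultimately show ?thesis
    unfolding U_grp_def by blast
qed

lemma mmul_U_grp_columns:
  assumes A: "A \<in> U_grp N" and B: "B \<in> U_grp N" and i: "i \<in> {1..N}" and l: "l \<in> {1..N}"
  shows "(\<Sum>k=1..N. cnj (mmul A B k i) * mmul A B k l) = kd i l"
proof -
  have "(\<Sum>k=1..N. cnj (mmul A B k i) * mmul A B k l) =
      (\<Sum>k=1..N. (\<Sum>p=1..N. cnj (A k p) * cnj (B p i)) * (\<Sum>q=1..N. A k q * B q l))"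
    by (rule sum.cong) (simp_all add: mmul_U_grp_inside[OF A])
  also have "\<dots> = (\<Sum>k=1..N. \<Sum>p=1..N. \<Sum>q=1..N. cnj (B p i) * B q l * (cnj (A k p) * A k q))"
    by (simp add: sum_distrib_left sum_distrib_right mult_ac)
  also have "\<dots> = (\<Sum>p=1..N. \<Sum>k=1..N. \<Sum>q=1..N. cnj (B p i) * B q l * (cnj (A k p) * A k q))"
    by (rule sum.swap)
  also have "\<dots> = (\<Sum>p=1..N. \<Sum>q=1..N. \<Sum>k=1..N. cnj (B p i) * B q l * (cnj (A k p) * A k q))"
    by (intro sum.cong refl sum.swap)
  also have "\<dots> = (\<Sum>p=1..N. \<Sum>q=1..N. cnj (B p i) * B q l * (\<Sum>k=1..N. cnj (A k p) * A k q))"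
    by (simp add: sum_distrib_left)
  also have "\<dots> = (\<Sum>p=1..N. \<Sum>q=1..N. cnj (B p i) * B q l * kd p q)"
    by (intro sum.cong refl) (use U_grp_columns[OF A] in \<open>simp only: atLeastAtMost_iff[symmetric]\<close>)
  also have "\<dots> = (\<Sum>p=1..N. cnj (B p i) * B p l)"
    by (intro sum.cong refl) (simp add: sum_mult_kd)
  finally show ?thesis
    using U_grp_columns[OF B i l] by simp
qed

lemma mmul_U_grp_rows:
  assumes A: "A \<in> U_grp N" and B: "B \<in> U_grp N" and i: "i \<in> {1..N}" and l: "l \<in> {1..N}"
  shows "(\<Sum>k=1..N. mmul A B i k * cnj (mmul A B l k)) = kd i l"
proof -
  have "(\<Sum>k=1..N. mmul A B i k * cnj (mmul A B l k)) =
      (\<Sum>k=1..N. (\<Sum>p=1..N. A i p * B p k) * (\<Sum>q=1..N. cnj (A l q) * cnj (B q k)))"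
    by (rule sum.cong) (simp_all add: mmul_U_grp_inside[OF A i] mmul_U_grp_inside[OF A l])
  also have "\<dots> = (\<Sum>k=1..N. \<Sum>p=1..N. \<Sum>q=1..N. A i p * cnj (A l q) * (B p k * cnj (B q k)))"
    by (simp add: sum_distrib_left sum_distrib_right mult_ac, intro sum.cong refl sum.swap)
  also have "\<dots> = (\<Sum>p=1..N. \<Sum>k=1..N. \<Sum>q=1..N. A i p * cnj (A l q) * (B p k * cnj (B q k)))"
    by (rule sum.swap)
  also have "\<dots> = (\<Sum>p=1..N. \<Sum>q=1..N. \<Sum>k=1..N. A i p * cnj (A l q) * (B p k * cnj (B q k)))"
    by (intro sum.cong refl sum.swap)
  also have "\<dots> = (\<Sum>p=1..N. \<Sum>q=1..N. A i p * cnj (A l q) * (\<Sum>k=1..N. B p k * cnj (B q k)))"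
    by (simp add: sum_distrib_left)
  also have "\<dots> = (\<Sum>p=1..N. \<Sum>q=1..N. A i p * cnj (A l q) * kd p q)"
    by (intro sum.cong refl) (use U_grp_rows[OF B] in \<open>simp only: atLeastAtMost_iff[symmetric]\<close>)
  also have "\<dots> = (\<Sum>p=1..N. A i p * cnj (A l p))"
    by (intro sum.cong refl) (simp add: sum_mult_kd)
  finally show ?thesis
    using U_grp_rows[OF A i l] by simp
qed

lemma mmul_in_U_grp:
  assumes A: "A \<in> U_grp N" and B: "B \<in> U_grp N"
  shows "mmul A B \<in> U_grp N"
proof -
  have "mmul A B i j = kd i j" if "i \<notin> {1..N} \<or> j \<notin> {1..N}" for i j
  proof (cases "i \<in> {1..N}")
    case False
    then show ?thesis using mmul_U_grp_outside[OF A] U_grp_outside[OF B] by simp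
  next
    case True
    then have "j \<notin> {1..N}" using that by blast
    then have "mmul A B i j = (\<Sum>k=1..N. A i k * kd k j)"
      using mmul_U_grp_inside[OF A True] U_grp_outside[OF B] by simp
    also have "\<dots> = 0" using \<open>j \<notin> {1..N}\<close> by (intro sum.neutral) (auto simp: kd_def)
    finally show ?thesis using True \<open>j \<notin> {1..N}\<close> by (auto simp: kd_def)
  qed
  then show ?thesis
    unfolding U_grp_def using mmul_U_grp_columns[OF A B] mmul_U_grp_rows[OF A B] by blast
qed

lemma mmul_assoc:
  assumes A: "A \<in> U_grp N" and B: "B \<in> U_grp N"
  shows "mmul (mmul A B) C = mmul A (mmul B C)"
proof (intro ext)
  fix i j
  show "mmul (mmul A B) C i j = mmul A (mmul B C) i j"
  proof (cases "i \<in> {1..N}")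
    case False
    then show ?thesis
      using mmul_U_grp_outside[OF mmul_in_U_grp[OF A B]] mmul_U_grp_outside[OF A]
        mmul_U_grp_outside[OF B] by simp
  next
    case True
    have "mmul (mmul A B) C i j = (\<Sum>k=1..N. (\<Sum>l=1..N. A i l * B l k) * C k j)"
      using mmul_U_grp_inside[OF mmul_in_U_grp[OF A B] True] mmul_U_grp_inside[OF A True] by simp
    also have "\<dots> = (\<Sum>k=1..N. \<Sum>l=1..N. A i l * (B l k * C k j))"
      by (simp add: sum_distrib_right mult.assoc)
    also have "\<dots> = (\<Sum>l=1..N. \<Sum>k=1..N. A i l * (B l k * C k j))"
      by (rule sum.swap)
    also have "\<dots> = (\<Sum>l=1..N. A i l * (\<Sum>k=1..N. B l k * C k j))"
      by (simp add: sum_distrib_left)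
    also have "\<dots> = mmul A (mmul B C) i j"
      using mmul_U_grp_inside[OF A True] mmul_U_grp_inside[OF B] by simp
    finally show ?thesis .
  qed
qed

definition madj :: "cmat \<Rightarrow> cmat" where
  "madj A = (\<lambda>i j. cnj (A j i))"

lemma madj_in_U_grp: "A \<in> U_grp n \<Longrightarrow> madj A \<in> U_grp n"
  by (auto simp: U_grp_def madj_def kd_commute)

lemma mmul_madj_left:
  assumes A: "A \<in> U_grp n"
  shows "mmul (madj A) A = Idm"
proof (intro ext)
  fix i j
  show "mmul (madj A) A i j = Idm i j"
  proof (cases "i \<in> {1..n}")
    case False
    then show ?thesis
      using mmul_U_grp_outside[OF madj_in_U_grp[OF A]] U_grp_outside[OF A] by (simp add: Idm_def)
  next
    case True
    have "mmul (madj A) A i j = (\<Sum>k=1..n. cnj (A k i) * A k j)"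
      using mmul_U_grp_inside[OF madj_in_U_grp[OF A] True] by (simp add: madj_def)
    also have "\<dots> = kd i j"
    proof (cases "j \<in> {1..n}")
      case True
      then show ?thesis using U_grp_columns[OF A \<open>i \<in> {1..n}\<close>] by simp
    next
      case False
      then show ?thesis
        using U_grp_outside[OF A] \<open>i \<in> {1..n}\<close> by (auto simp: kd_def intro: sum.neutral)
    qed
    finally show ?thesis by (simp add: Idm_def)
  qed
qed

lemma mmul_madj_right: "A \<in> U_grp n \<Longrightarrow> mmul A (madj A) = Idm"
  using mmul_madj_left[OF madj_in_U_grp, of A n] by (simp add: madj_def)

lemma U_grp_Suc_factor:
  assumes u: "u \<in> U_grp (Suc n)" and r: "r \<in> U_grp (Suc n)"
    and last_col: "\<And>i. u i (Suc n) = r i (Suc n)"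
  shows "mmul (madj r) u \<in> U_grp n" and "mmul r (mmul (madj r) u) = u"
proof -
  have "mmul (madj r) u i (Suc n) = mmul (madj r) r i (Suc n)" for i
    using last_col by (rule mmul_cong_column)
  then have "mmul (madj r) u (Suc n) (Suc n) = 1"
    by (simp add: mmul_madj_left[OF r] Idm_def)
  then show "mmul (madj r) u \<in> U_grp n"
    using U_grp_Suc_corner mmul_in_U_grp[OF madj_in_U_grp[OF r] u] by blast
  show "mmul r (mmul (madj r) u) = u"
    using mmul_assoc[OF r madj_in_U_grp[OF r]] mmul_madj_right[OF r] by simp
qed

subsection \<open>Reflections\<close>

lemma cnj_minus_one_nonzero: "w \<noteq> 1 \<Longrightarrow> cnj w - 1 \<noteq> 0"
  by (metis complex_cnj_cnj complex_cnj_one eq_iff_diff_eq_0)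

lemma unitary_rank_one_update:
  assumes y_outside: "\<And>i. i \<notin> {1..j} \<Longrightarrow> y i = 0"
    and \<beta>: "\<beta> + cnj \<beta> + cnj \<beta> * \<beta> * (\<Sum>k=1..j. cnj (y k) * y k) = 0"
  shows "(\<lambda>i k. kd i k + \<beta> * y i * cnj (y k)) \<in> U_grp j"
proof -
  define R where "R = (\<lambda>i k. kd i k + \<beta> * y i * cnj (y k))"
  let ?S = "\<Sum>k=1..j. cnj (y k) * y k"
  have outside: "R i k = kd i k" if "i \<notin> {1..j} \<or> k \<notin> {1..j}" for i k
    using that y_outside by (auto simp: R_def)
  have columns: "(\<Sum>k=1..j. cnj (R k i) * R k l) = kd i l" if "i \<in> {1..j}" "l \<in> {1..j}" for i l
  proof -
    have "(\<Sum>k=1..j. cnj (R k i) * R k l) =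
        (\<Sum>k=1..j. (kd k i + cnj \<beta> * cnj (y k) * y i) * (kd k l + \<beta> * y k * cnj (y l)))"
      by (simp add: R_def)
    also have "\<dots> = kd i l + \<beta> * y i * cnj (y l) + cnj \<beta> * cnj (y l) * y i +
        (\<Sum>k=1..j. (cnj \<beta> * cnj (y k) * y i) * (\<beta> * y k * cnj (y l)))"
      using that by (intro sum_kd_plus_mult_kd_plus) auto
    also have "(\<Sum>k=1..j. (cnj \<beta> * cnj (y k) * y i) * (\<beta> * y k * cnj (y l))) =
        cnj \<beta> * \<beta> * y i * cnj (y l) * ?S"
      by (simp add: sum_distrib_left mult_ac)
    finally have "(\<Sum>k=1..j. cnj (R k i) * R k l) =
        kd i l + y i * cnj (y l) * (\<beta> + cnj \<beta> + cnj \<beta> * \<beta> * ?S)"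
      by (simp add: algebra_simps)
    then show ?thesis using \<beta> by simp
  qed
  have rows: "(\<Sum>k=1..j. R i k * cnj (R l k)) = kd i l" if "i \<in> {1..j}" "l \<in> {1..j}" for i l
  proof -
    have "(\<Sum>k=1..j. R i k * cnj (R l k)) =
        (\<Sum>k=1..j. (kd k i + \<beta> * y i * cnj (y k)) * (kd k l + cnj \<beta> * cnj (y l) * y k))"
      by (simp add: R_def kd_commute[of i] kd_commute[of l])
    also have "\<dots> = kd i l + cnj \<beta> * cnj (y l) * y i + \<beta> * y i * cnj (y l) +
        (\<Sum>k=1..j. (\<beta> * y i * cnj (y k)) * (cnj \<beta> * cnj (y l) * y k))"
      using that by (intro sum_kd_plus_mult_kd_plus) auto
    also have "(\<Sum>k=1..j. (\<beta> * y i * cnj (y k)) * (cnj \<beta> * cnj (y l) * y k)) =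
        cnj \<beta> * \<beta> * y i * cnj (y l) * ?S"
      by (simp add: sum_distrib_left mult_ac)
    finally have "(\<Sum>k=1..j. R i k * cnj (R l k)) =
        kd i l + y i * cnj (y l) * (\<beta> + cnj \<beta> + cnj \<beta> * \<beta> * ?S)"
      by (simp add: algebra_simps)
    then show ?thesis using \<beta> by simp
  qed
  show ?thesis
    unfolding R_def[symmetric] U_grp_def using outside columns rows by blast
qed

definition reflection_vec :: "nat \<Rightarrow> cvec \<Rightarrow> cvec" where
  "reflection_vec j x = (\<lambda>i. x i - kd i j)"

definition reflection_coeff :: "nat \<Rightarrow> cvec \<Rightarrow> complex" where
  "reflection_coeff j x = 1 / (cnj (x j) - 1)"

definition reflection :: "nat \<Rightarrow> cvec \<Rightarrow> cmat" where
  "reflection j x = (\<lambda>i k. kd i k + reflection_coeff j x * reflection_vec j x i * cnj (reflection_vec j x k))"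

lemma sphere_n_outside: "x \<in> sphere_n j \<Longrightarrow> i \<notin> {1..j} \<Longrightarrow> x i = 0"
  by (auto simp: sphere_n_def)

lemma sphere_n_index: "x \<in> sphere_n j \<Longrightarrow> j \<in> {1..j}"
  by (cases j) (auto simp: sphere_n_def)

lemma sphere_n_sum_cnj_mult:
  assumes "x \<in> sphere_n j"
  shows "(\<Sum>k=1..j. cnj (x k) * x k) = 1"
proof -
  have "(\<Sum>k=1..j. cnj (x k) * x k) = (\<Sum>k=1..j. complex_of_real ((cmod (x k))\<^sup>2))"
    by (simp add: complex_norm_square[symmetric] mult.commute del: of_real_power)
  also have "\<dots> = 1"
    using assms by (simp add: sphere_n_def del: of_real_power flip: of_real_sum)
  finally show ?thesis .
qed

lemma sphere_n_eq_evec: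
  assumes x: "x \<in> sphere_n j" and xj: "x j = 1"
  shows "x = evec j"
proof -
  have j: "j \<in> {1..j}" using sphere_n_index[OF x] .
  have "(\<Sum>k=1..j. cnj (x k) * x k) = 1 + (\<Sum>k\<in>{1..j}-{j}. cnj (x k) * x k)"
    using sum.remove[OF _ j, of "\<lambda>k. cnj (x k) * x k"] xj by simp
  then have "(\<Sum>k\<in>{1..j}-{j}. cnj (x k) * x k) = 0"
    using sphere_n_sum_cnj_mult[OF x] by simp
  then have zero: "x k = 0" if "k \<in> {1..j}" "k \<noteq> j" for k
    using sum_cnj_mult_self_eq_0D[of "{1..j}-{j}" x k] that by simp
  show ?thesis
  proof
    fix i
    show "x i = evec j i"
      using zero[of i] sphere_n_outside[OF x, of i] xj by (cases "i \<in> {1..j}") (auto simp: evec_def)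
  qed
qed

lemma sum_cnj_mult_reflection_vec:
  assumes x: "x \<in> sphere_n j"
  shows "(\<Sum>k=1..j. cnj (x k) * reflection_vec j x k) = 1 - cnj (x j)"
proof -
  have "(\<Sum>k=1..j. cnj (x k) * reflection_vec j x k) =
      (\<Sum>k=1..j. cnj (x k) * x k) - (\<Sum>k=1..j. cnj (x k) * kd j k)"
    by (simp add: reflection_vec_def algebra_simps sum_subtractf kd_commute)
  then show ?thesis
    using sphere_n_sum_cnj_mult[OF x] sum_mult_kd[OF sphere_n_index[OF x], of "\<lambda>k. cnj (x k)"] by simp
qed

lemma sum_cnj_reflection_vec_mult_self:
  assumes x: "x \<in> sphere_n j"
  shows "(\<Sum>k=1..j. cnj (reflection_vec j x k) * reflection_vec j x k) = 2 - x j - cnj (x j)"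
proof -
  have "(\<Sum>k=1..j. cnj (reflection_vec j x k) * reflection_vec j x k) =
      (\<Sum>k=1..j. cnj (x k) * reflection_vec j x k - kd k j * reflection_vec j x k)"
    by (rule sum.cong) (simp_all add: reflection_vec_def algebra_simps)
  also have "\<dots> = (\<Sum>k=1..j. cnj (x k) * reflection_vec j x k) - (\<Sum>k=1..j. kd k j * reflection_vec j x k)"
    by (rule sum_subtractf)
  finally show ?thesis
    using sum_cnj_mult_reflection_vec[OF x] sum_kd_mult[OF sphere_n_index[OF x], of "reflection_vec j x"]
    by (simp add: reflection_vec_def)
qed

lemma reflection_vec_outside: "x \<in> sphere_n j \<Longrightarrow> i \<notin> {1..j} \<Longrightarrow> reflection_vec j x i = 0"
  using sphere_n_outside[of x j i] sphere_n_index[of x j] by (auto simp: reflection_vec_def kd_def)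

lemma reflection_vec_nonzero:
  assumes "x \<noteq> evec j"
  obtains i where "reflection_vec j x i \<noteq> 0"
proof -
  from assms obtain i where "x i \<noteq> evec j i" by auto
  then have "reflection_vec j x i \<noteq> 0" by (auto simp: reflection_vec_def evec_def kd_def)
  then show ?thesis using that by blast
qed

lemma reflection_coeff_mult_cnj_vec:
  "x j \<noteq> 1 \<Longrightarrow> reflection_coeff j x * cnj (reflection_vec j x j) = 1"
  using cnj_minus_one_nonzero[of "x j"] by (simp add: reflection_coeff_def reflection_vec_def)

lemma reflection_evec: "reflection j (evec j) = Idm"
  by (simp add: reflection_def reflection_vec_def evec_def kd_def Idm_def)

lemma reflection_column:
  assumes x: "x \<in> sphere_n j"
  shows "reflection j x i j = x i"
proof (cases "x j = 1")
  case True
  then have "x = evec j" using sphere_n_eq_evec[OF x] by simp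
  then show ?thesis by (simp only: reflection_evec) (simp add: Idm_def evec_def kd_def)
next
  case False
  have "reflection j x i j = kd i j + reflection_vec j x i * (reflection_coeff j x * cnj (reflection_vec j x j))"
    by (simp add: reflection_def mult_ac)
  then show ?thesis
    using reflection_coeff_mult_cnj_vec[of x j, OF False] by (simp add: reflection_vec_def)
qed

lemma reflection_coeff_identity:
  assumes "w \<noteq> 1"
  shows "1/(cnj w - 1) + cnj (1/(cnj w - 1)) + cnj (1/(cnj w - 1)) * (1/(cnj w - 1)) * (2 - w - cnj w) = 0"
proof -
  have "w - 1 \<noteq> 0" using assms by simp
  then show ?thesis
    using cnj_minus_one_nonzero[OF assms] by (simp add: field_simps) (simp add: add_divide_distrib[symmetric])
qed

lemma reflection_in_U_grp:
  assumes x: "x \<in> sphere_n j"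
  shows "reflection j x \<in> U_grp j"
proof (cases "x j = 1")
  case True
  then have "x = evec j" using sphere_n_eq_evec[OF x] by simp
  then show ?thesis by (simp add: reflection_evec Idm_in_U_grp)
next
  case False
  let ?\<beta> = "reflection_coeff j x"
  have "?\<beta> + cnj ?\<beta> + cnj ?\<beta> * ?\<beta> * (2 - x j - cnj (x j)) = 0"
    unfolding reflection_coeff_def by (rule reflection_coeff_identity[OF False])
  then show ?thesis
    unfolding reflection_def sum_cnj_reflection_vec_mult_self[OF x, symmetric]
    by (rule unitary_rank_one_update[rotated]) (rule reflection_vec_outside[OF x])
qed

lemma rank_one_pert_reflection:
  assumes x: "x \<in> sphere_n j" and ne: "x \<noteq> evec j"
  shows "rank_one_pert (reflection j x)"
proof -
  have "x j \<noteq> 1" using sphere_n_eq_evec[OF x] ne by auto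
  show ?thesis unfolding rank_one_pert_def
  proof (intro exI conjI allI)
    show "reflection_vec j x \<noteq> (\<lambda>_. 0)"
      using reflection_vec_nonzero[OF ne] by force
    show "(\<lambda>k. reflection_coeff j x * cnj (reflection_vec j x k)) \<noteq> (\<lambda>_. 0)"
      using reflection_coeff_mult_cnj_vec[of x j, OF \<open>x j \<noteq> 1\<close>] by (metis one_neq_zero)
    show "reflection j x i k - kd i k = reflection_vec j x i * (reflection_coeff j x * cnj (reflection_vec j x k))"
      for i k by (simp add: reflection_def mult_ac)
  qed
qed

lemma rank_one_pert_column_form:
  assumes r: "rank_one_pert r" and col: "\<And>i. r i j = x i" and ne: "x \<noteq> evec j"
  obtains c where "c j = 1" "\<And>i k. r i k = kd i k + reflection_vec j x i * c k"
proof -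
  obtain a b where ab: "\<And>i k. r i k - kd i k = a i * b k"
    using r unfolding rank_one_pert_def by blast
  have y: "reflection_vec j x i = a i * b j" for i
    using ab[of i j] col by (simp add: reflection_vec_def)
  obtain i0 where "reflection_vec j x i0 \<noteq> 0"
    using reflection_vec_nonzero[OF ne] .
  then have "b j \<noteq> 0" using y[of i0] by auto
  show ?thesis
  proof (rule that[of "\<lambda>k. b k / b j"])
    show "b j / b j = 1" using \<open>b j \<noteq> 0\<close> by simp
    show "r i k = kd i k + reflection_vec j x i * (b k / b j)" for i k
      using ab[of i k] y[of i] \<open>b j \<noteq> 0\<close> by (simp, metis diff_add_cancel add.commute)
  qed
qed

lemma reflection_unique:
  assumes x: "x \<in> sphere_n j" and ne: "x \<noteq> evec j"
    and r: "r \<in> U_grp j" and rank_one: "rank_one_pert r" and col: "\<And>i. r i j = x i"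
  shows "r = reflection j x"
proof -
  let ?y = "reflection_vec j x" and ?\<beta> = "reflection_coeff j x"
  have xj: "x j \<noteq> 1" using sphere_n_eq_evec[OF x] ne by auto
  obtain c where cj: "c j = 1" and rc: "\<And>i k. r i k = kd i k + ?y i * c k"
    using rank_one_pert_column_form[OF rank_one col ne] by blast
  obtain i0 where i0: "?y i0 \<noteq> 0" using reflection_vec_nonzero[OF ne] .
  have "c k = ?\<beta> * cnj (?y k)" for k
  proof (cases "k \<in> {1..j}")
    case False
    then have "?y i0 * c k = 0" using U_grp_outside[OF r, of i0 k] rc[of i0 k] by simp
    then show ?thesis using i0 reflection_vec_outside[OF x False] by simp
  next
    case k: True
    show ?thesis
    proof (cases "k = j")
      case True
      then show ?thesis using cj reflection_coeff_mult_cnj_vec[of x j, OF xj] by simp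
    next
      case False
      txt \<open>Orthogonality of the columns \<open>j\<close> and \<open>k\<close> of \<open>r\<close> determines \<open>c k\<close>.\<close>
      have "0 = (\<Sum>l=1..j. cnj (r l j) * r l k)"
        using U_grp_columns[OF r sphere_n_index[OF x] k] False by simp
      also have "\<dots> = (\<Sum>l=1..j. cnj (x l) * kd k l) + c k * (\<Sum>l=1..j. cnj (x l) * ?y l)"
        unfolding col by (simp add: rc algebra_simps kd_commute[of k] sum.distrib sum_distrib_left)
      also have "\<dots> = cnj (x k) + c k * (1 - cnj (x j))"
        using sum_mult_kd[OF k, of "\<lambda>l. cnj (x l)"] sum_cnj_mult_reflection_vec[OF x] by simp
      finally have "cnj (x k) + c k * (1 - cnj (x j)) = 0" by simp
      moreover have "?y k = x k" using False by (simp add: reflection_vec_def)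
      ultimately show ?thesis
        using cnj_minus_one_nonzero[OF xj] unfolding reflection_coeff_def by (simp add: field_simps)
    qed
  qed
  then show ?thesis
    unfolding reflection_def by (intro ext) (simp add: rc mult_ac)
qed

lemma refl_to_eq_reflection:
  assumes x: "x \<in> sphere_n j" and ne: "x \<noteq> evec j"
  shows "refl_to j x = reflection j x"
  unfolding refl_to_def
proof (rule the_equality)
  show "reflection j x \<in> U_grp j \<and> rank_one_pert (reflection j x) \<and> (\<forall>i. reflection j x i j = x i)"
    using reflection_in_U_grp[OF x] rank_one_pert_reflection[OF x ne] reflection_column[OF x] by blast
  show "r \<in> U_grp j \<and> rank_one_pert r \<and> (\<forall>i. r i j = x i) \<Longrightarrow> r = reflection j x" for r
    using reflection_unique[OF x ne] by blast
qed

lemma r_op_eq_reflection: "x \<in> sphere_n j \<Longrightarrow> r_op j x = reflection j x"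
  using refl_to_eq_reflection reflection_evec by (auto simp: r_op_def)

subsection \<open>The projection \<open>\<pi>\<^sub>n\<^sub>+\<^sub>1\<^sub>,\<^sub>n\<close>\<close>

lemma range_cond_Suc:
  "range_cond (Suc m) m u v \<longleftrightarrow> (\<forall>j. \<exists>c. \<forall>i. u i j - v i j = c * (u i (Suc m) - kd i (Suc m)))"
proof -
  have "{m<..Suc m} = {Suc m}" by auto
  then have "range_cond (Suc m) m u v \<longleftrightarrow>
      (\<forall>j. \<exists>c :: nat \<Rightarrow> complex. \<forall>i. u i j - v i j = c (Suc m) * (u i (Suc m) - kd i (Suc m)))"
    by (simp add: range_cond_def)
  also have "\<dots> \<longleftrightarrow> (\<forall>j. \<exists>c. \<forall>i. u i j - v i j = c * (u i (Suc m) - kd i (Suc m)))"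
    by (auto intro: exI[of _ "\<lambda>_. c" for c])
  finally show ?thesis .
qed

lemma pi_proj_eqI:
  assumes u: "u \<in> U_grp (Suc m)" and v: "v \<in> U_grp m" and rc: "range_cond (Suc m) m u v"
  shows "pi_proj (Suc m) m u = v"
  unfolding pi_proj_def
proof (rule the_equality)
  show "v \<in> U_grp m \<and> range_cond (Suc m) m u v" using v rc by blast
  fix v' assume "v' \<in> U_grp m \<and> range_cond (Suc m) m u v'"
  then have v': "v' \<in> U_grp m" and rc': "range_cond (Suc m) m u v'" by auto
  show "v' = v"
  proof (intro ext)
    fix i j
    obtain c where c: "\<And>i. u i j - v i j = c * (u i (Suc m) - kd i (Suc m))"
      using rc unfolding range_cond_Suc by blast
    obtain c' where c': "\<And>i. u i j - v' i j = c' * (u i (Suc m) - kd i (Suc m))"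
      using rc' unfolding range_cond_Suc by blast
    have diff: "v' i j - v i j = (c - c') * (u i (Suc m) - kd i (Suc m))" for i
    proof -
      have "v' i j - v i j = (u i j - v i j) - (u i j - v' i j)" by simp
      also have "\<dots> = c * (u i (Suc m) - kd i (Suc m)) - c' * (u i (Suc m) - kd i (Suc m))"
        by (simp only: c c')
      finally show ?thesis by (simp add: algebra_simps)
    qed
    show "v' i j = v i j"
    proof (cases "u (Suc m) (Suc m) = 1")
      case True
      then show ?thesis using diff[of i] U_grp_Suc_corner_column[OF u True, of i] by simp
    next
      case False
      have "v' (Suc m) j = v (Suc m) j" using U_grp_outside[OF v] U_grp_outside[OF v'] by simp
      then have "c = c'" using diff[of "Suc m"] False by simp
      then show ?thesis using diff[of i] by simp
    qed
  qed
qed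

lemma mmul_reflection_left:
  assumes x: "x \<in> sphere_n N"
  shows "mmul (reflection N x) B i j =
    B i j + reflection_coeff N x * reflection_vec N x i * (\<Sum>k=1..N. cnj (reflection_vec N x k) * B k j)"
proof (cases "i \<in> {1..N}")
  case False
  then show ?thesis
    using mmul_U_grp_outside[OF reflection_in_U_grp[OF x] False] reflection_vec_outside[OF x False] by simp
next
  case True
  have "mmul (reflection N x) B i j = (\<Sum>k=1..N. kd k i * B k j +
      reflection_coeff N x * reflection_vec N x i * (cnj (reflection_vec N x k) * B k j))"
    unfolding mmul_U_grp_inside[OF reflection_in_U_grp[OF x] True]
    by (rule sum.cong) (simp_all add: reflection_def algebra_simps kd_commute[of i])
  then show ?thesis
    using sum_kd_mult[OF True, of "\<lambda>k. B k j"] by (simp add: sum.distrib sum_distrib_left)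
qed

lemma mmul_reflection_last_column:
  assumes v: "v \<in> U_grp n" and x: "x \<in> sphere_n (Suc n)"
  shows "mmul (reflection (Suc n) x) v i (Suc n) = x i"
proof -
  let ?N = "Suc n" and ?y = "reflection_vec (Suc n) x"
  have "(\<Sum>k=1..?N. cnj (?y k) * v k ?N) = cnj (?y ?N)"
    using U_grp_outside[OF v] sum_mult_kd[of ?N "{1..?N}" "\<lambda>k. cnj (?y k)"] by (simp add: kd_commute)
  then have "mmul (reflection ?N x) v i ?N = reflection ?N x i ?N"
    using mmul_reflection_left[OF x, of v i ?N] U_grp_outside[OF v, of i ?N] by (simp add: reflection_def)
  then show ?thesis
    using reflection_column[OF x] by simp
qed

text \<open>
  \<open>r v - v\<close> has its range in the line spanned by \<open>r e\<^sub>N - e\<^sub>N\<close>, and \<open>r e\<^sub>N = (r v) e\<^sub>N\<close>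
  since \<open>v\<close> fixes \<open>e\<^sub>N\<close>: this is exactly the range condition.
\<close>

lemma pi_proj_mmul_reflection:
  assumes v: "v \<in> U_grp n" and x: "x \<in> sphere_n (Suc n)"
  shows "pi_proj (Suc n) n (mmul (reflection (Suc n) x) v) = v"
proof (rule pi_proj_eqI[OF mmul_in_U_grp[OF reflection_in_U_grp[OF x] U_grp_Suc[OF v]] v])
  let ?N = "Suc n" and ?r = "reflection (Suc n) x" and ?y = "reflection_vec (Suc n) x"
  let ?\<beta> = "reflection_coeff ?N x"
  have last_col: "mmul ?r v i ?N - kd i ?N = ?y i" for i
    using mmul_reflection_last_column[OF v x] by (simp add: reflection_vec_def)
  show "range_cond ?N n (mmul ?r v) v"
    unfolding range_cond_Suc
  proof (intro allI exI)
    show "mmul ?r v i j - v i j = (?\<beta> * (\<Sum>k=1..?N. cnj (?y k) * v k j)) * (mmul ?r v i ?N - kd i ?N)"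
      for i j using mmul_reflection_left[OF x, of v i j] by (simp add: last_col mult_ac)
  qed
qed

lemma U_grp_Suc_eq_mmul_reflection:
  assumes u: "u \<in> U_grp (Suc n)" and x: "x \<in> sphere_n (Suc n)" and col: "\<And>i. u i (Suc n) = x i"
  shows "pi_proj (Suc n) n u \<in> U_grp n" and "u = mmul (reflection (Suc n) x) (pi_proj (Suc n) n u)"
proof -
  let ?r = "reflection (Suc n) x"
  have r: "?r \<in> U_grp (Suc n)" using reflection_in_U_grp[OF x] .
  have "u i (Suc n) = ?r i (Suc n)" for i using col reflection_column[OF x] by simp
  note factor = U_grp_Suc_factor[OF u r this]
  have "pi_proj (Suc n) n u = mmul (madj ?r) u"
    using pi_proj_mmul_reflection[OF factor(1) x] factor(2) by simp
  then show "pi_proj (Suc n) n u \<in> U_grp n" and "u = mmul ?r (pi_proj (Suc n) n u)"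
    using factor by simp_all
qed

lemma rprod_in_U_grp:
  assumes "\<And>j. j \<in> {1..n} \<Longrightarrow> r j \<in> U_grp j"
  shows "rprod r n \<in> U_grp n"
  using assms
proof (induction n)
  case 0
  then show ?case by (simp add: Idm_in_U_grp)
next
  case (Suc n)
  then have "r (Suc n) \<in> U_grp (Suc n)" and "rprod r n \<in> U_grp (Suc n)"
    by (auto intro: U_grp_Suc)
  then show ?case by (simp add: mmul_in_U_grp)
qed

context
  fixes x :: "nat \<Rightarrow> cvec"
  assumes sph: "\<forall>n\<ge>1. x n \<in> sphere_n n"
begin

lemma rprod_r_op_Suc:
  "rprod (\<lambda>j. r_op j (x j)) (Suc n) = mmul (reflection (Suc n) (x (Suc n))) (rprod (\<lambda>j. r_op j (x j)) n)"
  using r_op_eq_reflection sph by simp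

lemma rprod_r_op_in_U_grp: "rprod (\<lambda>j. r_op j (x j)) n \<in> U_grp n"
  using sph by (intro rprod_in_U_grp) (simp add: r_op_eq_reflection reflection_in_U_grp)

lemma virtual_isometry_prescribed_columns_iff:
  "(virtual_isometry u \<and> (\<forall>n\<ge>1. \<forall>i. u n i n = x n i)) \<longleftrightarrow>
    (\<forall>n\<ge>1. u n = rprod (\<lambda>j. r_op j (x j)) n)"
  (is "?lhs \<longleftrightarrow> (\<forall>n\<ge>1. u n = ?R n)")
proof
  assume ?lhs
  then have vi: "\<And>n. n \<ge> 1 \<Longrightarrow> u n \<in> U_grp n \<and> pi_proj (Suc n) n (u (Suc n)) = u n"
    and col: "\<And>n i. n \<ge> 1 \<Longrightarrow> u n i n = x n i"
    unfolding virtual_isometry_def by auto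
  define w where "w n = pi_proj (Suc n) n (u (Suc n))" for n
  have "u (Suc n) \<in> U_grp (Suc n)" "x (Suc n) \<in> sphere_n (Suc n)" "u (Suc n) i (Suc n) = x (Suc n) i" for n i
    using vi[of "Suc n"] col[of "Suc n"] sph by simp_all
  note factor = U_grp_Suc_eq_mmul_reflection[OF this, folded w_def]
  have Suc: "u (Suc n) = ?R (Suc n)" for n
  proof (induction n)
    case 0
    have "w 0 = Idm" using factor(1)[of 0] by (simp add: U_grp_0)
    then show ?case using factor(2)[of 0] rprod_r_op_Suc[of 0] by simp
  next
    case (Suc n)
    have "w (Suc n) = ?R (Suc n)" using vi[of "Suc n"] Suc.IH by (simp add: w_def)
    then show ?case using factor(2)[of "Suc n"] rprod_r_op_Suc[of "Suc n"] by simp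
  qed
  show "\<forall>n\<ge>1. u n = ?R n"
  proof (intro allI impI)
    fix n :: nat assume "n \<ge> 1"
    then obtain m where "n = Suc m" by (cases n) auto
    then show "u n = ?R n" using Suc by simp
  qed
next
  assume R: "\<forall>n\<ge>1. u n = ?R n"
  have proj: "pi_proj (Suc n) n (?R (Suc n)) = ?R n" for n
    using pi_proj_mmul_reflection[OF rprod_r_op_in_U_grp, of "x (Suc n)" n] sph rprod_r_op_Suc[of n] by simp
  have last_col: "?R (Suc n) i (Suc n) = x (Suc n) i" for n i
    using mmul_reflection_last_column[OF rprod_r_op_in_U_grp, of "x (Suc n)" n] sph rprod_r_op_Suc[of n] by simp
  show ?lhs
    unfolding virtual_isometry_def
  proof (intro conjI allI impI)
    fix n i :: nat assume "n \<ge> 1"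
    then obtain m where m: "n = Suc m" by (cases n) auto
    show "u n \<in> U_grp n" using R \<open>n \<ge> 1\<close> rprod_r_op_in_U_grp by simp
    show "pi_proj (Suc n) n (u (Suc n)) = u n" using R \<open>n \<ge> 1\<close> proj by simp
    show "u n i n = x n i" using R \<open>n \<ge> 1\<close> last_col[of m i] m by simp
  qed
qed

end

lemma perm_mat_id: "perm_mat id = Idm"
  by (auto simp: perm_mat_def Idm_def kd_def)

lemma evec_in_sphere_n:
  assumes "a \<in> {1..j}"
  shows "evec a \<in> sphere_n j"
proof -
  have "(\<Sum>i=1..j. (cmod (evec a i))\<^sup>2) = (\<Sum>i=1..j. if i = a then 1 else 0)"
    by (rule sum.cong) (auto simp: evec_def)
  also have "\<dots> = 1" using assms by simp
  finally show ?thesis using assms unfolding sphere_n_def by (auto simp: evec_def)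
qed

lemma r_op_evec:
  assumes t: "t \<in> {1..j}"
  shows "r_op j (evec t) = perm_mat (tau j t)"
proof (cases "t = j")
  case True
  then show ?thesis by (simp add: r_op_def tau_def perm_mat_id)
next
  case False
  have "reflection_coeff j (evec t) = -1"
    using False by (simp add: reflection_coeff_def evec_def)
  then have "reflection j (evec t) = perm_mat (tau j t)"
    using False
    by (intro ext) (auto simp: reflection_def tau_def perm_mat_def reflection_vec_def evec_def kd_def transpose_def)
  then show ?thesis
    using r_op_eq_reflection[OF evec_in_sphere_n[OF t]] by simp
qed

lemma mmul_perm_mat:
  assumes f: "bij f"
  shows "mmul (perm_mat f) (perm_mat g) = perm_mat (f \<circ> g)"
proof (intro ext)
  fix i j
  have S: "{k. perm_mat f i k \<noteq> 0} = {inv f i}"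
    using f by (auto simp: perm_mat_def bij_inv_eq_iff bij_is_surj surj_f_inv_f)
  show "mmul (perm_mat f) (perm_mat g) i j = perm_mat (f \<circ> g) i j"
    unfolding mmul_def S using f by (auto simp: perm_mat_def bij_inv_eq_iff bij_is_surj surj_f_inv_f)
qed

lemma bij_tau: "bij (tau j t)"
  by (simp add: tau_def)

subsection \<open>Deleting points from the cycle structure\<close>

inductive first_hit :: "(nat \<Rightarrow> nat) \<Rightarrow> nat set \<Rightarrow> nat \<Rightarrow> nat \<Rightarrow> bool" for f A where
  hit: "f p \<in> A \<Longrightarrow> first_hit f A p (f p)"
| pass: "f p \<notin> A \<Longrightarrow> first_hit f A (f p) y \<Longrightarrow> first_hit f A p y"

lemma first_hit_funpow:
  assumes "first_hit f A p y"
  shows "\<exists>k>0. (f^^k) p = y \<and> (\<forall>l. 0 < l \<and> l < k \<longrightarrow> (f^^l) p \<notin> A) \<and> y \<in> A"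
  using assms
proof (induction rule: first_hit.induct)
  case (hit p)
  then show ?case by (intro exI[of _ 1]) auto
next
  case (pass p y)
  then obtain k where k: "k > 0" "(f^^k) (f p) = y" "\<forall>l. 0 < l \<and> l < k \<longrightarrow> (f^^l) (f p) \<notin> A" "y \<in> A"
    by blast
  show ?case
  proof (intro exI[of _ "Suc k"] conjI allI impI)
    show "(f ^^ Suc k) p = y" using k(2) by (simp add: funpow_Suc_right del: funpow.simps)
    fix l assume l: "0 < l \<and> l < Suc k"
    show "(f ^^ l) p \<notin> A"
    proof (cases "l = 1")
      case True
      then show ?thesis using pass.hyps(1) by simp
    next
      case False
      then obtain l' where "l = Suc l'" "0 < l'" "l' < k" using l by (cases l) auto
      then show ?thesis using k(3) by (simp add: funpow_Suc_right del: funpow.simps)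
    qed
  qed (use k in auto)
qed

lemma perm_restrict_first_hit:
  assumes "first_hit f {1..m} i y" "i \<in> {1..m}"
  shows "perm_restrict m f i = y"
proof -
  obtain k where k: "k>0" "(f^^k) i = y" "\<forall>l. 0 < l \<and> l < k \<longrightarrow> (f^^l) i \<notin> {1..m}" "y \<in> {1..m}"
    using first_hit_funpow[OF assms(1)] by blast
  have "(LEAST k. k > 0 \<and> (f ^^ k) i \<in> {1..m}) = k"
    by (rule Least_equality) (use k in \<open>auto simp: not_less[symmetric]\<close>)
  then show ?thesis using assms(2) k(2) by (simp add: perm_restrict_def)
qed

text \<open>\<open>g\<close> arises from \<open>f\<close> by inserting its fixed point \<open>M\<close> into a cycle; as \<open>M \<notin> A\<close>,
  first hits of \<open>A\<close> are unaffected.\<close>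

lemma first_hit_insert:
  assumes fM: "f M = M" and M: "M \<notin> A" and inj: "inj f"
    and g: "\<And>p. p \<noteq> M \<Longrightarrow> g p = f p \<or> (g p = M \<and> g M = f p)"
    and hit: "first_hit f A p y" and pM: "p \<noteq> M"
  shows "first_hit g A p y"
  using hit pM
proof (induction rule: first_hit.induct)
  case (hit p)
  from g[OF hit.prems] show ?case
  proof
    assume "g p = f p"
    then show ?thesis using hit.hyps first_hit.hit[of g p A] by simp
  next
    assume h: "g p = M \<and> g M = f p"
    then have "first_hit g A M (f p)" using first_hit.hit[of g M A] hit.hyps by simp
    then show ?thesis using first_hit.pass[of g p A] h M by simp
  qed
next
  case (pass p y)
  have "f p \<noteq> M" using pass.prems fM inj by (metis injD)
  then have IH: "first_hit g A (f p) y" using pass.IH by blast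
  from g[OF pass.prems] show ?case
  proof
    assume "g p = f p"
    then show ?thesis using first_hit.pass[of g p A y] pass.hyps(1) IH by simp
  next
    assume h: "g p = M \<and> g M = f p"
    then have "first_hit g A M y" using first_hit.pass[of g M A y] pass.hyps(1) IH by simp
    then show ?thesis using first_hit.pass[of g p A y] h M by simp
  qed
qed



subsection \<open>Virtual permutations from transpositions\<close>

context
  fixes ii :: "nat \<Rightarrow> nat"
  assumes ii_range: "\<And>n. n \<ge> 1 \<Longrightarrow> ii n \<in> {1..n}"
begin

lemma sigma_prod_permutes: "sigma_prod ii n permutes {1..n}"
proof (induction n)
  case 0
  then show ?case by (simp add: id_def[symmetric])
next
  case (Suc n)
  have t: "tau (Suc n) (ii (Suc n)) permutes {1..Suc n}"
    using ii_range[of "Suc n"] by (auto simp: tau_def intro: permutes_swap_id)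
  have "sigma_prod ii n permutes {1..Suc n}" by (rule permutes_subset[OF Suc.IH]) auto
  then show ?case using permutes_compose[OF _ t] by (simp only: sigma_prod.simps)
qed

lemma sigma_prod_Suc_cases:
  assumes p: "p \<noteq> Suc n"
  shows "sigma_prod ii (Suc n) p = sigma_prod ii n p \<or>
     (sigma_prod ii (Suc n) p = Suc n \<and> sigma_prod ii (Suc n) (Suc n) = sigma_prod ii n p)"
proof -
  let ?f = "sigma_prod ii n" and ?a = "ii (Suc n)"
  have fN: "?f (Suc n) = Suc n" using permutes_not_in[OF sigma_prod_permutes] by simp
  have fp: "?f p \<noteq> Suc n" using fN p permutes_inj[OF sigma_prod_permutes[of n]] by (metis injD)
  show ?thesis
  proof (cases "?a = Suc n")
    case True
    then show ?thesis by (simp add: tau_def)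
  next
    case False
    then show ?thesis using fN fp by (cases "?f p = ?a") (simp_all add: tau_def transpose_def)
  qed
qed

lemma sigma_prod_restrict:
  assumes "m \<le> n"
  shows "sigma_prod ii m = perm_restrict m (sigma_prod ii n)"
proof (intro ext)
  fix i
  show "sigma_prod ii m i = perm_restrict m (sigma_prod ii n) i"
  proof (cases "i \<in> {1..m}")
    case False
    then show ?thesis using permutes_not_in[OF sigma_prod_permutes[of m] False] by (auto simp: perm_restrict_def)
  next
    case True
    have "first_hit (sigma_prod ii n) {1..m} i (sigma_prod ii m i)" using assms
    proof (induction n rule: dec_induct)
      case base
      have "sigma_prod ii m i \<in> {1..m}" using permutes_in_image[OF sigma_prod_permutes] True by simp
      then show ?case by (rule first_hit.hit)
    next
      case (step n)
      show ?case
      proof (rule first_hit_insert[OF _ _ _ _ step.IH])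
        show "sigma_prod ii n (Suc n) = Suc n" using permutes_not_in[OF sigma_prod_permutes] by simp
        show "Suc n \<notin> {1..m}" using step.hyps by simp
        show "inj (sigma_prod ii n)" using permutes_inj[OF sigma_prod_permutes] .
        show "i \<noteq> Suc n" using True step.hyps by simp
      qed (rule sigma_prod_Suc_cases)
    qed
    then show ?thesis using perm_restrict_first_hit True by simp
  qed
qed

lemma virtual_perm_sigma_prod: "virtual_perm (sigma_prod ii)"
  unfolding virtual_perm_def using sigma_prod_permutes sigma_prod_restrict by blast

lemma rprod_r_op_evec:
  assumes "\<And>n. n \<ge> 1 \<Longrightarrow> x n = evec (ii n)"
  shows "rprod (\<lambda>j. r_op j (x j)) n = perm_mat (sigma_prod ii n)"
proof (induction n)
  case 0
  then show ?case using perm_mat_id by (simp add: id_def)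
next
  case (Suc n)
  have "r_op (Suc n) (x (Suc n)) = perm_mat (tau (Suc n) (ii (Suc n)))"
    using assms r_op_evec[OF ii_range[of "Suc n"]] by simp
  then show ?case
    using Suc.IH mmul_perm_mat[OF bij_tau] by (simp add: comp_def)
qed

end

theorem proposition2p5:
  fixes x :: "nat \<Rightarrow> nat \<Rightarrow> complex"
  assumes sph: "\<forall>n\<ge>1. x n \<in> sphere_n n"
  shows "(\<forall>u. (virtual_isometry u \<and> (\<forall>n\<ge>1. \<forall>i. u n i n = x n i))
              \<longleftrightarrow> (\<forall>n\<ge>1. u n = rprod (\<lambda>j. r_op j (x j)) n))
       \<and> (\<forall>ii :: nat \<Rightarrow> nat. (\<forall>n\<ge>1. ii n \<in> {1..n} \<and> x n = evec (ii n)) \<longrightarrow>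
            virtual_perm (sigma_prod ii) \<and>
            (\<forall>n\<ge>1. rprod (\<lambda>j. r_op j (x j)) n = perm_mat (sigma_prod ii n)))"
proof (intro conjI allI impI)
  show "(virtual_isometry u \<and> (\<forall>n\<ge>1. \<forall>i. u n i n = x n i))
      \<longleftrightarrow> (\<forall>n\<ge>1. u n = rprod (\<lambda>j. r_op j (x j)) n)" for u
    using virtual_isometry_prescribed_columns_iff[OF sph] .
next
  fix ii :: "nat \<Rightarrow> nat" and n :: nat
  assume "\<forall>n\<ge>1. ii n \<in> {1..n} \<and> x n = evec (ii n)"
  then have ii_range: "\<And>n. n \<ge> 1 \<Longrightarrow> ii n \<in> {1..n}" and x: "\<And>n. n \<ge> 1 \<Longrightarrow> x n = evec (ii n)"
    by blast+
  show "virtual_perm (sigma_prod ii)"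
    using virtual_perm_sigma_prod[OF ii_range] .
  show "rprod (\<lambda>j. r_op j (x j)) n = perm_mat (sigma_prod ii n)"
    using rprod_r_op_evec[OF ii_range x] .
qed

end
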